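(* Let $N\ge 1$ and let $\mathcal{M}_N$ be the set of real symmetric $2N\times 2N$ matrices $\mathbf{V}$ with $\mathbf{V}+\tfrac{i}{2}\mathbf{\Omega}>0$. For $\mathbf{V}\in\mathcal{M}_N$ and real symmetric $2N\times 2N$ matrices $\mathbf{A},\mathbf{B}$ define $$G_{\mathbf{V}}(\mathbf{A},\mathbf{B})=\int_{-1}^{1}d\lambda\;\mathrm{Tr}\Big[\mathbf{B}\,\big(2\mathbf{V}+i\lambda\mathbf{\Omega}\big)^{-1}\mathbf{A}\,\big(2\mathbf{V}+i\lambda\mathbf{\Omega}\big)^{-1}\Big].$$ Then for every real symplectic $2N\times 2N$ matrix $\mathbf{S}$ (i.e. $\mathbf{S}\mathbf{\Omega}\mathbf{S}^T=\mathbf{\Omega}$), every $\mathbf{V}\in\mathcal{M}_N$ and all real symmetric $\mathbf{A},\mathbf{B}$, $$G_{\mathbf{S}\mathbf{V}\mathbf{S}^T}\big(\mathbf{S}\mathbf{A}\mathbf{S}^T,\mathbf{S}\mathbf{B}\mathbf{S}^T\big)=G_{\mathbf{V}}(\mathbf{A},\mathbf{B}).$$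
   Context: $\mathbf{\Omega}$ is the $2N\times 2N$ symplectic form $\mathbf{\Omega}=\begin{pmatrix}0&\mathbb{I}_N\\-\mathbb{I}_N&0\end{pmatrix}$. The set $\mathcal{M}_N$ parametrizes (via covariance matrices) the faithful, zero-displacement $N$-mode bosonic Gaussian states, and is an open subset of the space of real symmetric $2N\times 2N$ matrices, whose tangent space at each point is identified with the real symmetric $2N\times2N$ matrices. $G_{\mathbf{V}}$ is the Kubo-Mori-Bogoliubov (KMB) metric on this manifold (the negative Hessian of the quantum relative entropy between Gaussian states, written in covariance-matrix coordinates). *)

theory Defs
  imports "HOL-Analysis.Analysis"
begin

text \<open>Modes are indexed by a finite type 'n (so N = CARD('n) \<ge> 1); the 2N phase-space
  coordinates are indexed by 'n + 'n, the first copy (Inl) being the x-block and the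
  second copy (Inr) the p-block.\<close>

type_synonym ('n) rmat = "real ^ ('n + 'n) ^ ('n + 'n)"
type_synonym ('n) cmat = "complex ^ ('n + 'n) ^ ('n + 'n)"

definition symplectic_form :: "('n::finite) rmat" ("\<Omega>") where
  "symplectic_form = (\<chi> a b. (case (a, b) of
      (Inl i, Inr j) \<Rightarrow> (if i = j then 1 else 0)
    | (Inr i, Inl j) \<Rightarrow> (if i = j then -1 else 0)
    | _ \<Rightarrow> 0))"

definition cplx :: "('n::finite) rmat \<Rightarrow> 'n cmat" where
  "cplx A = (\<chi> a b. complex_of_real (A $ a $ b))"

definition real_symmetric :: "('n::finite) rmat \<Rightarrow> bool" where
  "real_symmetric A \<longleftrightarrow> transpose A = A"

definition hermitian :: "('n::finite) cmat \<Rightarrow> bool" where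
  "hermitian M \<longleftrightarrow> (\<forall>a b. M $ b $ a = cnj (M $ a $ b))"

definition pos_def_cmat :: "('n::finite) cmat \<Rightarrow> bool" where
  "pos_def_cmat M \<longleftrightarrow> hermitian M \<and>
     (\<forall>x :: complex ^ ('n + 'n). x \<noteq> 0 \<longrightarrow>
        0 < Re (\<Sum>a\<in>UNIV. \<Sum>b\<in>UNIV. cnj (x $ a) * M $ a $ b * x $ b))"

definition cov_matrices :: "('n::finite) rmat set" where
  "cov_matrices = {V. real_symmetric V \<and>
       pos_def_cmat (\<chi> a b. complex_of_real (V $ a $ b) + (\<i> / 2) * complex_of_real (\<Omega> $ a $ b))}"

definition symplectic :: "('n::finite) rmat \<Rightarrow> bool" where
  "symplectic S \<longleftrightarrow> S ** \<Omega> ** transpose S = \<Omega>"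

definition KMB_metric :: "('n::finite) rmat \<Rightarrow> 'n rmat \<Rightarrow> 'n rmat \<Rightarrow> complex" where
  "KMB_metric V A B = integral {-1..1} (\<lambda>t::real.
      let R = matrix_inv (\<chi> a b. 2 * complex_of_real (V $ a $ b)
                         + \<i> * complex_of_real t * complex_of_real (\<Omega> $ a $ b))
      in trace (cplx B ** R ** cplx A ** R))"

end

theory Submission
  imports Defs
begin

(* Since S \<Omega> S^T = \<Omega>, a symplectic S acts on the pencil 2V + i\<lambda>\<Omega> by congruence:
   2 S V S^T + i\<lambda>\<Omega> = S (2V + i\<lambda>\<Omega>) S^T. Its inverse R therefore becomes S^-T R S^-1, and the
   integrand B R A R becomes the similar matrix S (B R A R) S^-1, which has the same trace, for
   every \<lambda>. The one analytic input is that the pencil is invertible for |\<lambda>| \<le> 1: the real part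
   of its quadratic form at x is (1 + \<lambda>) Re x^*(V + i\<Omega>/2)x + (1 - \<lambda>) Re x^T(V + i\<Omega>/2)conj(x),
   a combination, with nonnegative weights that do not both vanish, of two values of the positive
   definite form of V + i\<Omega>/2. *)

lemma matrix_inv_left:
  fixes A :: "'a::semiring_1^'n^'n"
  assumes "invertible A"
  shows "matrix_inv A ** A = mat 1"
  by (metis (mono_tags, lifting) assms invertible_def matrix_inv_def someI_ex)

lemma matrix_inv_right:
  fixes A :: "'a::semiring_1^'n^'n"
  assumes "invertible A"
  shows "A ** matrix_inv A = mat 1"
  by (metis (mono_tags, lifting) assms invertible_def matrix_inv_def someI_ex)

lemma matrix_inv_unique:
  fixes A B :: "'a::field^'n^'n"
  assumes "A ** B = mat 1"
  shows "matrix_inv A = B"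
proof -
  have "invertible A"
    using assms invertible_right_inverse by blast
  have "matrix_inv A = matrix_inv A ** (A ** B)"
    using assms by simp
  also have "\<dots> = B"
    by (metis matrix_inv_left[OF \<open>invertible A\<close>] matrix_mul_assoc matrix_mul_lid)
  finally show ?thesis .
qed

lemma transpose_matrix_inv_right:
  fixes T :: "'a::comm_semiring_1^'n^'n"
  assumes "invertible T"
  shows "transpose T ** transpose (matrix_inv T) = mat 1"
  by (metis assms matrix_inv_left matrix_transpose_mul transpose_mat)

lemma matrix_inv_congruence:
  fixes T M :: "'a::field^'n^'n"
  assumes "invertible T" and "invertible M"
  shows "matrix_inv (T ** M ** transpose T) = transpose (matrix_inv T) ** matrix_inv M ** matrix_inv T"
proof (rule matrix_inv_unique)
  have "T ** M ** transpose T ** (transpose (matrix_inv T) ** matrix_inv M ** matrix_inv T)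
      = T ** M ** (transpose T ** transpose (matrix_inv T)) ** matrix_inv M ** matrix_inv T"
    by (simp add: matrix_mul_assoc)
  also have "\<dots> = T ** (M ** matrix_inv M) ** matrix_inv T"
    by (simp add: transpose_matrix_inv_right[OF assms(1)] matrix_mul_assoc)
  also have "\<dots> = mat 1"
    by (simp add: assms matrix_inv_right)
  finally show "T ** M ** transpose T ** (transpose (matrix_inv T) ** matrix_inv M ** matrix_inv T) = mat 1" .
qed

lemma trace_congruence_matrix_inv:
  fixes T M X Y :: "'a::field^'n^'n"
  assumes "invertible T" and "invertible M"
  shows "trace ((T ** Y ** transpose T) ** matrix_inv (T ** M ** transpose T)
                 ** (T ** X ** transpose T) ** matrix_inv (T ** M ** transpose T))
       = trace (Y ** matrix_inv M ** X ** matrix_inv M)"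
proof -
  let ?R = "matrix_inv M" and ?Ti = "matrix_inv T"
  have "(T ** Y ** transpose T) ** (transpose ?Ti ** ?R ** ?Ti)
          ** (T ** X ** transpose T) ** (transpose ?Ti ** ?R ** ?Ti)
      = T ** Y ** (transpose T ** transpose ?Ti) ** ?R ** (?Ti ** T) ** X
          ** (transpose T ** transpose ?Ti) ** ?R ** ?Ti"
    by (simp add: matrix_mul_assoc)
  also have "\<dots> = T ** (Y ** ?R ** X ** ?R ** ?Ti)"
    by (simp add: assms(1) transpose_matrix_inv_right matrix_inv_left matrix_mul_assoc)
  finally have "trace ((T ** Y ** transpose T) ** (transpose ?Ti ** ?R ** ?Ti)
          ** (T ** X ** transpose T) ** (transpose ?Ti ** ?R ** ?Ti))
      = trace (Y ** ?R ** X ** ?R ** ?Ti ** T)"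
    by (metis trace_mul_sym)
  also have "\<dots> = trace (Y ** ?R ** X ** ?R)"
    by (simp add: assms(1) matrix_inv_left matrix_mul_assoc[symmetric])
  finally show ?thesis
    by (simp add: matrix_inv_congruence assms)
qed

lemma matrix_congruence_lincomb:
  fixes T X Y :: "'a::comm_semiring_1^'n^'n"
  shows "T ** (\<chi> a b. c * X $ a $ b + d * Y $ a $ b) ** transpose T
       = (\<chi> a b. c * (T ** X ** transpose T) $ a $ b + d * (T ** Y ** transpose T) $ a $ b)"
  by (simp add: vec_eq_iff matrix_matrix_mult_def transpose_def sum_distrib_left sum_distrib_right
      sum.distrib distrib_left distrib_right mult_ac)

lemma cplx_mult: "cplx (A ** B) = cplx A ** cplx B"
  by (simp add: cplx_def matrix_matrix_mult_def vec_eq_iff)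

lemma cplx_transpose: "cplx (transpose A) = transpose (cplx A)"
  by (simp add: cplx_def transpose_def vec_eq_iff)

lemma cplx_mat: "cplx (mat c) = mat (complex_of_real c)"
  by (simp add: cplx_def mat_def vec_eq_iff)

lemma invertible_cplx:
  assumes "invertible A"
  shows "invertible (cplx A)"
proof -
  obtain A' where "A ** A' = mat 1" and "A' ** A = mat 1"
    using assms invertible_def by blast
  then have "cplx A ** cplx A' = mat 1" and "cplx A' ** cplx A = mat 1"
    by (simp_all flip: cplx_mult add: cplx_mat)
  then show ?thesis
    unfolding invertible_def by blast
qed

lemma sum_UNIV_Plus:
  fixes f :: "'a::finite + 'b::finite \<Rightarrow> 'c::comm_monoid_add"
  shows "(\<Sum>x\<in>UNIV. f x) = (\<Sum>i\<in>UNIV. f (Inl i)) + (\<Sum>j\<in>UNIV. f (Inr j))"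
  using sum.Plus[of "UNIV :: 'a set" "UNIV :: 'b set" f] by (simp add: o_def)

lemma symplectic_form_orthogonal: "(\<Omega> :: ('n::finite) rmat) ** transpose \<Omega> = mat 1"
  unfolding vec_eq_iff
proof (intro allI)
  fix a b :: "'n + 'n"
  show "((\<Omega> :: 'n rmat) ** transpose \<Omega>) $ a $ b = mat 1 $ a $ b"
    by (cases a; cases b)
       (simp_all add: matrix_matrix_mult_def transpose_def symplectic_form_def mat_def
          sum_UNIV_Plus if_distrib if_distribR cong: if_cong)
qed

lemma invertible_symplectic:
  assumes "symplectic S"
  shows "invertible S"
proof -
  have "S ** (\<Omega> ** transpose S ** transpose \<Omega>) = (S ** \<Omega> ** transpose S) ** transpose \<Omega>"
    by (simp add: matrix_mul_assoc)
  also have "\<dots> = mat 1"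
    using assms symplectic_form_orthogonal unfolding symplectic_def by simp
  finally show ?thesis
    using invertible_right_inverse by blast
qed

definition pencil :: "('n::finite) rmat \<Rightarrow> real \<Rightarrow> 'n cmat" where
  "pencil V t = (\<chi> a b. 2 * complex_of_real (V $ a $ b)
                         + \<i> * complex_of_real t * complex_of_real (\<Omega> $ a $ b))"

lemma KMB_metric_pencil:
  "KMB_metric V A B
     = integral {-1..1} (\<lambda>t. trace (cplx B ** matrix_inv (pencil V t) ** cplx A ** matrix_inv (pencil V t)))"
  by (simp add: KMB_metric_def pencil_def Let_def)

lemma pencil_symplectic_congruence:
  assumes "symplectic S"
  shows "pencil (S ** V ** transpose S) t = cplx S ** pencil V t ** transpose (cplx S)"
proof -
  have pencil_cplx: "pencil W t = (\<chi> a b. 2 * cplx W $ a $ b + (\<i> * complex_of_real t) * cplx \<Omega> $ a $ b)"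
    for W :: "'a rmat"
    by (simp add: pencil_def cplx_def mult.assoc)
  have "cplx S ** cplx \<Omega> ** transpose (cplx S) = cplx \<Omega>"
    using assms unfolding symplectic_def by (simp flip: cplx_mult cplx_transpose)
  then show ?thesis
    by (simp add: pencil_cplx matrix_congruence_lincomb cplx_mult cplx_transpose)
qed

lemma inner_complex_eq_Re_cnj_mult: "inner u v = Re (cnj u * v)"
  by (simp add: inner_complex_def)

lemma inner_matrix_vector_mult:
  fixes M :: "complex^'n^'n"
  shows "inner x (M *v x) = (\<Sum>a\<in>UNIV. \<Sum>b\<in>UNIV. Re (cnj (x $ a) * M $ a $ b * x $ b))"
  by (simp only: inner_vec_def matrix_vector_mult_def vec_lambda_beta inner_complex_eq_Re_cnj_mult
      sum_distrib_left Re_sum mult.assoc)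

lemma invertible_if_inner_pos:
  fixes M :: "'a::{field, real_inner}^'n^'n"
  assumes "\<And>x. x \<noteq> 0 \<Longrightarrow> 0 < inner x (M *v x)"
  shows "invertible M"
  unfolding invertible_left_inverse matrix_left_invertible_ker
  using assms by fastforce

lemma inner_pencil:
  fixes V :: "('n::finite) rmat"
  assumes K_def: "K = (\<chi> a b. complex_of_real (V $ a $ b) + (\<i> / 2) * complex_of_real (\<Omega> $ a $ b))"
  shows "inner x (pencil V t *v x)
     = (1 + t) * inner x (K *v x) + (1 - t) * inner (\<chi> a. cnj (x $ a)) (K *v (\<chi> a. cnj (x $ a)))"
proof -
  have entry: "Re (cnj u * (2 * complex_of_real v + \<i> * complex_of_real t * complex_of_real w) * y)
      = (1 + t) * Re (cnj u * (complex_of_real v + \<i> / 2 * complex_of_real w) * y)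
        + (1 - t) * Re (cnj (cnj u) * (complex_of_real v + \<i> / 2 * complex_of_real w) * cnj y)"
    for u y :: complex and v w :: real
    by (simp add: algebra_simps; simp add: field_simps)
  show ?thesis
    unfolding inner_matrix_vector_mult pencil_def K_def vec_lambda_beta entry
    by (simp only: sum.distrib sum_distrib_left)
qed

lemma invertible_pencil:
  assumes "V \<in> cov_matrices" and "\<bar>t\<bar> \<le> 1"
  shows "invertible (pencil V t)"
proof (rule invertible_if_inner_pos)
  define K :: "'a cmat"
    where "K = (\<chi> a b. complex_of_real (V $ a $ b) + (\<i> / 2) * complex_of_real (\<Omega> $ a $ b))"
  have K_pos: "0 < inner y (K *v y)" if "y \<noteq> 0" for y
  proof -
    have "0 < Re (\<Sum>a\<in>UNIV. \<Sum>b\<in>UNIV. cnj (y $ a) * K $ a $ b * y $ b)"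
      using assms(1) that unfolding cov_matrices_def pos_def_cmat_def K_def by blast
    then show ?thesis
      by (simp only: inner_matrix_vector_mult Re_sum)
  qed
  fix x :: "complex^('a + 'a)"
  assume "x \<noteq> 0"
  then have "(\<chi> a. cnj (x $ a)) \<noteq> 0"
    by (simp add: vec_eq_iff)
  with \<open>x \<noteq> 0\<close> have "0 < inner x (K *v x)" and "0 < inner (\<chi> a. cnj (x $ a)) (K *v (\<chi> a. cnj (x $ a)))"
    by (simp_all add: K_pos)
  with assms(2) show "0 < inner x (pencil V t *v x)"
    unfolding inner_pencil[OF K_def] by (cases "0 \<le> t") (simp_all add: add_pos_nonneg add_nonneg_pos)
qed

theorem theorem1:
  fixes S V A B :: "('n::finite) rmat"
  assumes "symplectic S"
    and "V \<in> cov_matrices"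
    and "real_symmetric A"
    and "real_symmetric B"
  shows "KMB_metric (S ** V ** transpose S) (S ** A ** transpose S) (S ** B ** transpose S)
           = KMB_metric V A B"
proof -
  have S: "invertible (cplx S)"
    using assms(1) by (simp add: invertible_cplx invertible_symplectic)
  have "trace (cplx (S ** B ** transpose S) ** matrix_inv (pencil (S ** V ** transpose S) t)
                ** cplx (S ** A ** transpose S) ** matrix_inv (pencil (S ** V ** transpose S) t))
      = trace (cplx B ** matrix_inv (pencil V t) ** cplx A ** matrix_inv (pencil V t))"
    if "t \<in> {-1..1}" for t
  proof -
    have "invertible (pencil V t)"
      using assms(2) that by (simp add: invertible_pencil abs_le_iff)
    moreover have "cplx (S ** X ** transpose S) = cplx S ** cplx X ** transpose (cplx S)" for X
      by (simp only: cplx_mult cplx_transpose)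
    ultimately show ?thesis
      using S by (simp only: pencil_symplectic_congruence[OF assms(1)] trace_congruence_matrix_inv)
  qed
  then show ?thesis
    unfolding KMB_metric_pencil by (rule integral_cong)
qed

end
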